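(* Let $g$ be a positive integer; suppose that for some $l$ the set $S_l$ contains a consecutive prospective prime pair with gap $g$, and let $j>l+2$. Let $(a,a+g)$ be a consecutive prospective prime pair with gap $g$ in $S_j$. Then for every $0\le m\le P_{j+2}-1$, the number of integers $m_{j+1}\in\{0,\dots,P_{j+1}-1\}$ such that, with $M=m_{j+1}P_j\#+mP_{j+1}\#$, both $a+M$ and $a+g+M$ are coprime to $P_{j+2}\#$ (i.e. the number of pairs generated from $(a,a+g)$ that lie in the subset $S_{j+2}^{(m)}$) is at least $P_{j+1}-4$.
   Context: $P_k$ denotes the $k$-th prime ($P_1=2$), $P_k\#=\prod_{i=1}^kP_i$. $S_k=\{N\in\mathbb{N}:5\le N\le4+P_k\#\}$ and $S_k^{(m)}=\{N:5+mP_{k-1}\#\le N\le 4+(m+1)P_{k-1}\#\}$ for $0\le m\le P_k-1$. A prospective prime in $S_k$ is an $N\in S_k$ coprime to $P_k\#$; prospective primes $a<b$ in $S_k$ are consecutive if no integer strictly between them is coprime to $P_k\#$; a consecutive prospective prime pair with gap $g$ is a pair $(a,a+g)$ of consecutive prospective primes. *)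

theory Defs
  imports "HOL-Computational_Algebra.Primes" "HOL-Library.Infinite_Set"
begin

text \<open>P k = k-th prime, 1-indexed (P 1 = 2).\<close>
definition P :: "nat \<Rightarrow> nat" where
  "P k = enumerate {p::nat. prime p} (k - 1)"

definition primorial :: "nat \<Rightarrow> nat" where
  "primorial k = (\<Prod>i\<in>{1..k}. P i)"

definition S :: "nat \<Rightarrow> nat set" where
  "S k = {N. 5 \<le> N \<and> N \<le> 4 + primorial k}"

definition S_sub :: "nat \<Rightarrow> nat \<Rightarrow> nat set" where
  "S_sub k m = {N. 5 + m * primorial (k - 1) \<le> N \<and> N \<le> 4 + (m + 1) * primorial (k - 1)}"

definition prospective :: "nat \<Rightarrow> nat \<Rightarrow> bool" where
  "prospective k N \<longleftrightarrow> N \<in> S k \<and> coprime N (primorial k)"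

definition consecutive :: "nat \<Rightarrow> nat \<Rightarrow> nat \<Rightarrow> bool" where
  "consecutive k a b \<longleftrightarrow> prospective k a \<and> prospective k b \<and> a < b \<and>
     (\<forall>n. a < n \<and> n < b \<longrightarrow> \<not> coprime n (primorial k))"

definition cpp_pair :: "nat \<Rightarrow> nat \<Rightarrow> nat \<Rightarrow> bool" where
  "cpp_pair k g a \<longleftrightarrow> consecutive k a (a + g)"

end

theory Submission
  imports Defs "HOL-Number_Theory.Cong"
begin

text \<open>
  Put c = P_j#, p = P_(j+1) and q = P_(j+2), so that P_(j+2)# = c p q. As m_(j+1) runs over
  0, ..., p - 1, both members of the generated pair run through arithmetic progressions with
  difference c, hence stay coprime to c. Since c is invertible modulo the primes p and q, and
  there are only p <= q terms, each progression meets each of the classes 0 mod p and 0 mod q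
  at most once; so at most four values of m_(j+1) are lost.
\<close>

lemma prime_P: "prime (P k)"
  unfolding P_def using enumerate_in_set[OF primes_infinite] by blast

lemma P_strict_mono: "1 \<le> i \<Longrightarrow> i < k \<Longrightarrow> P i < P k"
  unfolding P_def by (intro enumerate_mono[OF _ primes_infinite]) auto

lemma primorial_Suc: "primorial (Suc k) = primorial k * P (Suc k)"
  unfolding primorial_def by (simp add: prod.cl_ivl_Suc)

lemma coprime_primorial_P: "j < k \<Longrightarrow> coprime (primorial j) (P k)"
  unfolding primorial_def
proof (intro prod_coprime_left)
  fix i assume "j < k" "i \<in> {1..j}"
  then have "P i < P k" by (intro P_strict_mono) auto
  then show "coprime (P i) (P k)" by (intro primes_coprime prime_P) auto
qed

lemma coprime_add_mult_left: "coprime (b + x * c) c \<longleftrightarrow> coprime b (c::nat)"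
  by (metis coprime_iff_gcd_eq_1 gcd.commute gcd_add_mult add.commute)

lemma card_dvd_progression_le_1:
  fixes r c b n :: nat
  assumes "coprime c r" "n \<le> r"
  shows "card {x \<in> {0..<n}. r dvd b + x * c} \<le> 1"
proof -
  have "x = y" if "x \<in> {x \<in> {0..<n}. r dvd b + x * c}" "y \<in> {x \<in> {0..<n}. r dvd b + x * c}"
    for x y
  proof -
    from that have xy: "x < r" "y < r" "[b + x * c = 0] (mod r)" "[b + y * c = 0] (mod r)"
      using assms(2) by (auto simp: cong_0_iff)
    then have "[b + x * c = b + y * c] (mod r)" by (metis cong_sym cong_trans)
    then have "[x = y] (mod r)" using assms(1) by (simp add: cong_add_lcancel_nat cong_mult_rcancel_nat)
    then show "x = y" using xy cong_less_modulus_unique_nat by blast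
  qed
  then show ?thesis using card_le_Suc0_iff_eq[of "{x \<in> {0..<n}. r dvd b + x * c}"] by auto
qed

lemma card_coprime_progressions_ge:
  fixes c n :: nat and R B :: "nat set"
  assumes "finite R" "finite B"
    and R: "\<And>r. r \<in> R \<Longrightarrow> prime r \<and> coprime c r \<and> n \<le> r"
    and B: "\<And>b. b \<in> B \<Longrightarrow> coprime b c"
  shows "n - card R * card B \<le> card {x \<in> {0..<n}. \<forall>b\<in>B. coprime (b + x * c) (c * \<Prod>R)}"
    (is "_ \<le> card ?good")
proof -
  let ?hit = "\<lambda>r b. {x \<in> {0..<n}. r dvd b + x * c}"
  have "{0..<n} - ?good \<subseteq> (\<Union>r\<in>R. \<Union>b\<in>B. ?hit r b)"
  proof
    fix x assume "x \<in> {0..<n} - ?good"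
    then obtain b where "x < n" "b \<in> B" "\<not> coprime (b + x * c) (c * \<Prod>R)" by auto
    moreover have "coprime (b + x * c) c" using B[OF \<open>b \<in> B\<close>] coprime_add_mult_left by blast
    ultimately obtain r where "r \<in> R" "\<not> coprime (b + x * c) r"
      using prod_coprime_right by (metis coprime_mult_right_iff)
    then have "r dvd b + x * c" using R prime_imp_coprime coprime_commute by metis
    then show "x \<in> (\<Union>r\<in>R. \<Union>b\<in>B. ?hit r b)" using \<open>x < n\<close> \<open>b \<in> B\<close> \<open>r \<in> R\<close> by auto
  qed
  then have "card ({0..<n} - ?good) \<le> card (\<Union>r\<in>R. \<Union>b\<in>B. ?hit r b)"
    using assms(1,2) by (intro card_mono) auto
  also have "\<dots> \<le> (\<Sum>r\<in>R. \<Sum>b\<in>B. card (?hit r b))"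
    using assms(1,2) by (intro order.trans[OF card_UN_le] sum_mono card_UN_le) auto
  also have "\<dots> \<le> (\<Sum>r\<in>R. \<Sum>b\<in>B. 1)"
    using R by (intro sum_mono card_dvd_progression_le_1) auto
  also have "\<dots> = card R * card B" by simp
  finally have "card ({0..<n} - ?good) \<le> card R * card B" .
  moreover have "card ({0..<n} - ?good) = n - card ?good" by (subst card_Diff_subset) auto
  ultimately show ?thesis by linarith
qed

theorem lemma5:
  fixes g l j a :: nat
  assumes "g > 0"
    and "\<exists>b. cpp_pair l g b"
    and "j > l + 2"
    and "cpp_pair j g a"
  shows "\<forall>m \<le> P (j + 2) - 1.
           card {mj1 \<in> {0..<P (j + 1)}.
                   coprime (a + mj1 * primorial j + m * primorial (j + 1)) (primorial (j + 2)) \<and>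
                   coprime (a + g + mj1 * primorial j + m * primorial (j + 1)) (primorial (j + 2))}
           \<ge> P (j + 1) - 4"
proof (intro allI impI)
  fix m
  let ?c = "primorial j" and ?p = "P (j + 1)" and ?q = "P (j + 2)"
  let ?B = "{a + m * primorial (j + 1), a + g + m * primorial (j + 1)}"
  have "?p < ?q" by (intro P_strict_mono) auto
  then have R: "r \<in> {?p, ?q} \<Longrightarrow> prime r \<and> coprime ?c r \<and> ?p \<le> r" for r
    using prime_P coprime_primorial_P[of j] by auto
  have "coprime a ?c" "coprime (a + g) ?c"
    using assms(4) unfolding cpp_pair_def consecutive_def prospective_def by auto
  then have B: "b \<in> ?B \<Longrightarrow> coprime b ?c" for b
    using coprime_add_mult_left[of a "m * ?p" ?c] coprime_add_mult_left[of "a + g" "m * ?p" ?c]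
    by (auto simp: primorial_Suc ac_simps)
  have "primorial (j + 2) = ?c * \<Prod>{?p, ?q}"
    using \<open>?p < ?q\<close> by (simp add: primorial_Suc)
  then have "{x \<in> {0..<?p}. \<forall>b\<in>?B. coprime (b + x * ?c) (?c * \<Prod>{?p, ?q})} =
      {mj1 \<in> {0..<?p}.
         coprime (a + mj1 * ?c + m * primorial (j + 1)) (primorial (j + 2)) \<and>
         coprime (a + g + mj1 * ?c + m * primorial (j + 1)) (primorial (j + 2))}"
    (is "_ = ?pairs") by (auto simp: ac_simps)
  moreover have "?p - 4 \<le> ?p - card {?p, ?q} * card ?B"
    using card_insert_le[of ?B] by (intro diff_le_mono2) (simp add: card_insert_if)
  ultimately show "?p - 4 \<le> card ?pairs"
    using card_coprime_progressions_ge[of "{?p, ?q}" ?B ?c ?p] R B by auto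
qed

end
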